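(* For every weak composition $\alpha$, the underlying diagram (ignoring labels) of $\mathsf{snow}(D(\alpha))$ equals $\bigcup_{(r,c)\in\mathsf{dark}(\alpha)}\big(([r]\times\{c\})\cup(\{r\}\times[c])\big)$.
   Context: A weak composition is an infinite sequence of nonnegative integers with finitely many positive entries. $D(\alpha)=\{(r,c):1\le c\le\alpha_r\}$, $(r,c)$ being the cell in row $r$ (row 1 on top), column $c$; $[m]=\{1,\dots,m\}$. For a diagram $D$, $\mathsf{snow}(D)$ is built by iterating through rows from bottom to top: in row $r$ take the rightmost cell $(r,c)\in D$ such that column $c$ contains no dark cloud yet; if it exists label it a dark cloud and add snowflake cells at $(r',c)$ for all $r'<r$ with $(r',c)\notin D$. $\mathsf{dark}(\alpha)$ is the set of dark-cloud cells of $\mathsf{snow}(D(\alpha))$. *)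

theory Defs
  imports Main
begin

text \<open>A weak composition is a sequence of naturals indexed by rows 1,2,...
  with finitely many positive entries. We use a function nat => nat; the
  value at index 0 is ignored (rows start at 1).\<close>

definition weak_composition :: "(nat \<Rightarrow> nat) \<Rightarrow> bool" where
  "weak_composition \<alpha> \<longleftrightarrow> finite {r. 0 < \<alpha> r}"

text \<open>Cells are pairs (row, column); row 1 is on top.\<close>
definition diagram :: "(nat \<Rightarrow> nat) \<Rightarrow> (nat \<times> nat) set" where
  "diagram \<alpha> = {(r, c). 1 \<le> r \<and> 1 \<le> c \<and> c \<le> \<alpha> r}"

text \<open>Dark-cloud selection: process rows r, r-1, ..., 1 (bottom to top),
  given the set K of dark clouds found so far. In row r take the rightmost
  cell of D whose column has no dark cloud yet.\<close>
fun dark_aux :: "(nat \<times> nat) set \<Rightarrow> nat \<Rightarrow> (nat \<times> nat) set \<Rightarrow> (nat \<times> nat) set" where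
  "dark_aux D 0 K = K"
| "dark_aux D (Suc r) K =
     (let C = {c. (Suc r, c) \<in> D \<and> c \<notin> snd ` K}
      in if C = {} then dark_aux D r K else dark_aux D r (insert (Suc r, Max C) K))"

definition bottom_row :: "(nat \<times> nat) set \<Rightarrow> nat" where
  "bottom_row D = Max (insert 0 (fst ` D))"

definition snow_dark :: "(nat \<times> nat) set \<Rightarrow> (nat \<times> nat) set" where
  "snow_dark D = dark_aux D (bottom_row D) {}"

definition snow_diagram :: "(nat \<times> nat) set \<Rightarrow> (nat \<times> nat) set" where
  "snow_diagram D = D \<union> {(r', c). \<exists>r. (r, c) \<in> snow_dark D \<and> 1 \<le> r' \<and> r' < r \<and> (r', c) \<notin> D}"

definition dark :: "(nat \<Rightarrow> nat) \<Rightarrow> (nat \<times> nat) set" where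
  "dark \<alpha> = snow_dark (diagram \<alpha>)"

end

theory Submission
  imports Defs
begin

text \<open>Every cell of the diagram is either in the row of a dark cloud weakly to its right,
  or in the column of a dark cloud weakly below it: when the scan reaches its row, its
  column is either still free (so the rightmost free cell of the row becomes a dark cloud)
  or already holds a dark cloud from a lower row. Dark clouds are cells of a left-justified
  diagram, so the row segment to the left of a dark cloud lies in the diagram, and the cells
  above it are either in the diagram or snowflakes.\<close>

definition free_columns :: "(nat \<times> nat) set \<Rightarrow> nat \<Rightarrow> (nat \<times> nat) set \<Rightarrow> nat set" where
  "free_columns D r K = {c. (r, c) \<in> D \<and> c \<notin> snd ` K}"

definition left_justified :: "(nat \<times> nat) set \<Rightarrow> bool" where
  "left_justified D \<longleftrightarrow> (\<forall>(r, c)\<in>D. 1 \<le> r \<and> 1 \<le> c \<and> {r} \<times> {1..c} \<subseteq> D)"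

lemma dark_aux_Suc_free_columns:
  "dark_aux D (Suc r) K =
    (if free_columns D (Suc r) K = {} then dark_aux D r K
     else dark_aux D r (insert (Suc r, Max (free_columns D (Suc r) K)) K))"
  unfolding free_columns_def dark_aux.simps Let_def by (rule refl)

declare dark_aux.simps(2) [simp del]

lemma finite_free_columns: "finite D \<Longrightarrow> finite (free_columns D r K)"
  unfolding free_columns_def
  by (rule finite_subset[of _ "snd ` D"]) (auto intro: rev_image_eqI)

lemma Max_free_columns_in_diagram:
  assumes "finite D" "free_columns D r K \<noteq> {}"
  shows "(r, Max (free_columns D r K)) \<in> D"
  using Max_in[OF finite_free_columns[OF assms(1)] assms(2)] by (simp add: free_columns_def)

lemma dark_aux_superset: "K \<subseteq> dark_aux D r K"
proof (induction r arbitrary: K)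
  case 0
  then show ?case by simp
next
  case (Suc r)
  then show ?case
    by (simp add: dark_aux_Suc_free_columns) (meson insert_subset subset_insertI)
qed

lemma dark_aux_subset:
  assumes "finite D"
  shows "dark_aux D r K \<subseteq> K \<union> D"
proof (induction r arbitrary: K)
  case 0
  then show ?case by simp
next
  case (Suc r)
  then show ?case
    using Max_free_columns_in_diagram[OF assms, of "Suc r" K]
    by (simp add: dark_aux_Suc_free_columns) blast
qed

lemma dark_aux_covers:
  assumes "finite D" "(r0, c) \<in> D" "1 \<le> r0" "r0 \<le> r" "\<forall>x\<in>K. r < fst x"
  shows "\<exists>(r', c')\<in>dark_aux D r K. (r' = r0 \<and> c \<le> c') \<or> (c' = c \<and> r0 \<le> r')"
  using assms(4,5)
proof (induction r arbitrary: K)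
  case 0
  with assms(3) show ?case by simp
next
  case (Suc r)
  let ?C = "free_columns D (Suc r) K"
  show ?case
  proof (cases "r0 = Suc r")
    case True
    show ?thesis
    proof (cases "c \<in> ?C")
      case True
      then have "?C \<noteq> {}" and "c \<le> Max ?C"
        using finite_free_columns[OF assms(1)] by auto
      moreover have "(Suc r, Max ?C) \<in> dark_aux D (Suc r) K"
        using \<open>?C \<noteq> {}\<close> dark_aux_superset by (simp add: dark_aux_Suc_free_columns) blast
      ultimately show ?thesis
        using \<open>r0 = Suc r\<close> by blast
    next
      case False
      then obtain y where "y \<in> K" "snd y = c"
        using assms(2) \<open>r0 = Suc r\<close> by (auto simp: free_columns_def)
      moreover have "r0 \<le> fst y"
        using Suc.prems(2) \<open>y \<in> K\<close> \<open>r0 = Suc r\<close> by fastforce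
      ultimately show ?thesis
        using dark_aux_superset[of K D "Suc r"] by (intro bexI[of _ y]) auto
    qed
  next
    case False
    then have "r0 \<le> r"
      using Suc.prems(1) by simp
    define K' where "K' = (if ?C = {} then K else insert (Suc r, Max ?C) K)"
    have "dark_aux D (Suc r) K = dark_aux D r K'"
      by (simp add: K'_def dark_aux_Suc_free_columns)
    moreover have "\<forall>x\<in>K'. r < fst x"
      using Suc.prems(2) by (auto simp: K'_def)
    ultimately show ?thesis
      using Suc.IH[OF \<open>r0 \<le> r\<close>] by simp
  qed
qed

lemma snow_dark_subset: "finite D \<Longrightarrow> snow_dark D \<subseteq> D"
  using dark_aux_subset by (fastforce simp: snow_dark_def)

lemma snow_dark_covers:
  assumes "finite D" "(r0, c) \<in> D" "1 \<le> r0"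
  shows "\<exists>(r', c')\<in>snow_dark D. (r' = r0 \<and> c \<le> c') \<or> (c' = c \<and> r0 \<le> r')"
proof -
  have "r0 \<le> bottom_row D"
    using assms(1,2) unfolding bottom_row_def by (auto intro!: Max_ge rev_image_eqI)
  then show ?thesis
    using dark_aux_covers[OF assms] by (simp add: snow_dark_def)
qed

theorem snow_diagram_left_justified:
  assumes "finite D" "left_justified D"
  shows "snow_diagram D = (\<Union>(r, c)\<in>snow_dark D. ({1..r} \<times> {c}) \<union> ({r} \<times> {1..c}))"
    (is "_ = ?U")
proof
  show "snow_diagram D \<subseteq> ?U"
  proof (rule subrelI)
    fix r0 c assume "(r0, c) \<in> snow_diagram D"
    then consider "(r0, c) \<in> D" | r where "(r, c) \<in> snow_dark D" "1 \<le> r0" "r0 < r"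
      by (auto simp: snow_diagram_def)
    then show "(r0, c) \<in> ?U"
    proof cases
      case 1
      then have "1 \<le> r0" "1 \<le> c"
        using assms(2) by (auto simp: left_justified_def)
      with snow_dark_covers[OF assms(1) 1] show ?thesis
        by fastforce
    next
      case 2
      then show ?thesis
        by fastforce
    qed
  qed
next
  show "?U \<subseteq> snow_diagram D"
  proof clarify
    fix r c a b
    assume cloud: "(r, c) \<in> snow_dark D" and "(a, b) \<in> {1..r} \<times> {c} \<union> {r} \<times> {1..c}"
    moreover have "(r, c) \<in> D"
      using cloud snow_dark_subset[OF assms(1)] by blast
    ultimately consider "a < r" "1 \<le> a" "b = c" | "(a, b) \<in> D"
      using assms(2) unfolding left_justified_def by fastforce
    then show "(a, b) \<in> snow_diagram D"
      using cloud by cases (auto simp: snow_diagram_def)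
  qed
qed

lemma finite_diagram: "weak_composition \<alpha> \<Longrightarrow> finite (diagram \<alpha>)"
  unfolding weak_composition_def diagram_def
  by (rule finite_subset[of _ "SIGMA r:{r. 0 < \<alpha> r}. {1..\<alpha> r}"]) auto

lemma left_justified_diagram: "left_justified (diagram \<alpha>)"
  by (auto simp: left_justified_def diagram_def)

theorem lemma4p14:
  fixes \<alpha> :: "nat \<Rightarrow> nat"
  assumes "weak_composition \<alpha>"
  shows "snow_diagram (diagram \<alpha>) =
    (\<Union>(r, c)\<in>dark \<alpha>. ({1..r} \<times> {c}) \<union> ({r} \<times> {1..c}))"
  unfolding dark_def
  using snow_diagram_left_justified[OF finite_diagram[OF assms] left_justified_diagram] .

end
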